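(* Let $g\ge 2$, $q=2g+1$, and let $\tau_g$ and $\tau_g^{\mathrm{CS}}$ be the period matrices of $C_{q,1}$ with respect to the symplectic bases $\{A_i,B_i\}$ and $\{a_i,b_i\}$ respectively. Then $\tau_g$ is invertible and $$\tau_g^{\mathrm{CS}}=-\tau_g^{-1}+I_g.$$
   Context: $C_{q,1}$ is the compact Riemann surface of $y^q=x(1-x)$ (genus $g$); $\zeta=\exp(2\pi\sqrt{-1}/q)$, $\sigma(x,y)=(x,\zeta y)$, $I_0(t)=(t,\sqrt[q]{t(1-t)})$, $c_j$ the class of $I_0\cdot(\sigma^j\circ I_0)^{-1}$. In coordinates $z=4^{1/q}y$, $w=-\sqrt{-1}(2x-1)$ (so $w^2=z^q-1$), $\gamma_k(t)=(\zeta^k 2t,\sqrt{-1}\sqrt{1-(2t)^q})$ for $0\le t\le 1/2$ and $(\zeta^k(2-2t),-\sqrt{-1}\sqrt{1-(2-2t)^q})$ for $1/2\le t\le 1$; $A_i=\gamma_{2i-1}\cdot\gamma_{2i}^{-1}$, $B_i=\gamma_{2i-1}\cdot\gamma_{2i-2}^{-1}\cdots\gamma_1\cdot\gamma_0^{-1}$; $a_i=\sum_{k=1}^{2i-1}(-1)^{k-1}c_k$, $b_i=\sum_{k=1}^{2i-2}(-1)^{k-1}c_k+c_{2i}$. The period matrix w.r.t. a symplectic basis $\{\alpha_i,\beta_i\}$ is $\Omega_\alpha^{-1}\Omega_\beta$ with $\Omega_\alpha=(\int_{\alpha_j}\omega_i)$, $\Omega_\beta=(\int_{\beta_j}\omega_i)$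 for a basis $\omega_1,\dots,\omega_g$ of holomorphic 1-forms. *)

theory Defs
  imports "HOL-Analysis.Analysis" "Jordan_Normal_Form.Gauss_Jordan_Elimination"
begin

text \<open>Points of the affine part of the curve are represented by their coordinates,
as elements of complex x complex. A path is a map real => complex x complex on [0,1].\<close>

definition zeta :: "nat \<Rightarrow> complex" where
  "zeta q = exp (2 * pi * \<i> / of_nat q)"

text \<open>Coordinate change (x,y) |-> (z,w) = (4^(1/q) y, -i(2x-1)), so that w^2 = z^q - 1.\<close>
definition to_zw :: "nat \<Rightarrow> complex \<times> complex \<Rightarrow> complex \<times> complex" where
  "to_zw q p = (of_real (root q 4) * snd p, - \<i> * (2 * fst p - 1))"

definition sigma :: "nat \<Rightarrow> complex \<times> complex \<Rightarrow> complex \<times> complex" where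
  "sigma q p = (fst p, zeta q * snd p)"

definition I0 :: "nat \<Rightarrow> real \<Rightarrow> complex \<times> complex" where
  "I0 q t = (of_real t, of_real (root q (t * (1 - t))))"

text \<open>gamma_k in (z,w) coordinates.\<close>
definition gam :: "nat \<Rightarrow> nat \<Rightarrow> real \<Rightarrow> complex \<times> complex" where
  "gam q k t = (if t \<le> 1/2
     then (zeta q ^ k * of_real (2 * t), \<i> * of_real (sqrt (1 - (2 * t) ^ q)))
     else (zeta q ^ k * of_real (2 - 2 * t), - \<i> * of_real (sqrt (1 - (2 - 2 * t) ^ q))))"

text \<open>Holomorphic differential omega_i = z^i dz / w (i = 0..g-1), a basis of the
holomorphic 1-forms on the compact curve w^2 = z^q - 1, q = 2g+1.
Its integral along a path gamma (given in (z,w) coordinates) is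
integral_0^1 (z^i / w)(gamma t) * (z o gamma)'(t) dt.\<close>
definition omega_int :: "nat \<Rightarrow> (real \<Rightarrow> complex \<times> complex) \<Rightarrow> complex" where
  "omega_int i \<gamma> = integral {0..1}
     (\<lambda>t. (fst (\<gamma> t)) ^ i / snd (\<gamma> t) * vector_derivative (\<lambda>s. fst (\<gamma> s)) (at t within {0..1}))"

text \<open>Integral over a 1-chain: a list of (integer coefficient, path).
Integrals over loop products are sums of integrals over the factors,
with the inverse path contributing with sign -1.\<close>
definition chain_int :: "nat \<Rightarrow> (int \<times> (real \<Rightarrow> complex \<times> complex)) list \<Rightarrow> complex" where
  "chain_int i cs = (\<Sum>(n, \<gamma>) \<leftarrow> cs. of_int n * omega_int i \<gamma>)"

definition cycA :: "nat \<Rightarrow> nat \<Rightarrow> (int \<times> (real \<Rightarrow> complex \<times> complex)) list" where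
  "cycA q i = [(1, gam q (2*i - 1)), (-1, gam q (2*i))]"

text \<open>B_i = gamma_{2i-1} . gamma_{2i-2}^{-1} ... gamma_1 . gamma_0^{-1}\<close>
definition cycB :: "nat \<Rightarrow> nat \<Rightarrow> (int \<times> (real \<Rightarrow> complex \<times> complex)) list" where
  "cycB q i = map (\<lambda>k. ((-1) ^ (2*i - 1 - k), gam q k)) (rev [0..<2*i])"

definition cyc_c :: "nat \<Rightarrow> nat \<Rightarrow> (int \<times> (real \<Rightarrow> complex \<times> complex)) list" where
  "cyc_c q j = [(1, to_zw q \<circ> I0 q), (-1, to_zw q \<circ> (sigma q ^^ j) \<circ> I0 q)]"

text \<open>a_i = sum_{k=1}^{2i-1} (-1)^(k-1) c_k ;  b_i = sum_{k=1}^{2i-2} (-1)^(k-1) c_k + c_{2i}\<close>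
definition cyca :: "nat \<Rightarrow> nat \<Rightarrow> (int \<times> (real \<Rightarrow> complex \<times> complex)) list" where
  "cyca q i = concat (map (\<lambda>k. map (\<lambda>(n, \<gamma>). ((-1) ^ (k - 1) * n, \<gamma>)) (cyc_c q k)) [1..<2*i])"

definition cycb :: "nat \<Rightarrow> nat \<Rightarrow> (int \<times> (real \<Rightarrow> complex \<times> complex)) list" where
  "cycb q i = concat (map (\<lambda>k. map (\<lambda>(n, \<gamma>). ((-1) ^ (k - 1) * n, \<gamma>)) (cyc_c q k)) [1..<2*i - 1])
              @ cyc_c q (2*i)"

text \<open>Matrix of periods (int_{alpha_j} omega_i), i,j = 1..g (0-based indices).\<close>
definition period_mat :: "nat \<Rightarrow> (nat \<Rightarrow> (int \<times> (real \<Rightarrow> complex \<times> complex)) list) \<Rightarrow> complex mat" where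
  "period_mat g \<alpha> = mat g g (\<lambda>(i, j). chain_int i (\<alpha> (j + 1)))"

definition mat_inv :: "complex mat \<Rightarrow> complex mat" where
  "mat_inv A = the (mat_inverse A)"

definition period_matrix :: "nat \<Rightarrow> (nat \<Rightarrow> (int \<times> (real \<Rightarrow> complex \<times> complex)) list)
     \<Rightarrow> (nat \<Rightarrow> (int \<times> (real \<Rightarrow> complex \<times> complex)) list) \<Rightarrow> complex mat" where
  "period_matrix g \<alpha> \<beta> = mat_inv (period_mat g \<alpha>) * period_mat g \<beta>"

end

theory Submission
  imports Defs "Jordan_Normal_Form.Determinant"
begin

text \<open>
  On the curve w^2 = z^q - 1 each path gamma_k, and each lifted path
  sigma^k o I_0 (in (z,w) coordinates), runs radially from z = 0 out to the branch point
  z = zeta^k and back on the other sheet of w.  Hence the integral of omega_i = z^i dz / w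
  along either path equals K_i * eta_i^k, where
      K_i = -2 i F_i,   F_i = integral_0^1 s^i / sqrt(1 - s^q) ds > 0,   eta_i = zeta^(i+1).
  Summing over the chains gives the period relations  a_m = -B_m  and  b_m = A_m - B_m,
  i.e. Omega_a = -Omega_B and Omega_b = Omega_A - Omega_B.  Both Omega_A and Omega_B are
  nonsingular: a kernel vector would give a polynomial of degree < g (resp. \<le> g) vanishing
  at the g distinct points eta_i^2 (and at 1).  The theorem is then linear algebra:
      (-Omega_B)^-1 (Omega_A - Omega_B) = 1 - (Omega_A^-1 Omega_B)^-1.
  Sections: the real integral F_i; the period of a single path; periods of the cycles;
  roots of unity and polynomials; linear algebra; nonsingularity; the theorem.
\<close>


section \<open>The basic real integral\<close>

text \<open>The integrand s^i / sqrt(1 - s^q) of the abelian integral; it has an integrable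
  singularity at s = 1.\<close>
definition abel_density :: "nat \<Rightarrow> nat \<Rightarrow> real \<Rightarrow> real" where
  "abel_density q i s = s ^ i / sqrt (1 - s ^ q)"

text \<open>Its primitive F_i(x) = integral_0^x; the value F_i(1) is the modulus of every period.\<close>
definition abel_prim :: "nat \<Rightarrow> nat \<Rightarrow> real \<Rightarrow> real" where
  "abel_prim q i x = integral {0..x} (abel_density q i)"

lemma power_less_one_real: "q \<ge> 1 \<Longrightarrow> 0 \<le> x \<Longrightarrow> x < 1 \<Longrightarrow> x ^ q < (1::real)"
  by (simp add: power_less_one_iff)

lemma abel_prim_zero [simp]: "abel_prim q i 0 = 0"
  by (simp add: abel_prim_def)

lemma inv_sqrt_has_integral: "((\<lambda>s. 1 / sqrt (1 - s)) has_integral 2) {0..1::real}"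
proof -
  have cont: "continuous_on {0..1} (\<lambda>s::real. - 2 * sqrt (1 - s))"
    by (intro continuous_intros)
  have deriv: "((\<lambda>s. - 2 * sqrt (1 - s)) has_vector_derivative 1 / sqrt (1 - x)) (at x)"
    if "x \<in> {0<..<1}" for x :: real
  proof -
    have "((\<lambda>s. - 2 * sqrt (1 - s)) has_real_derivative 1 / sqrt (1 - x)) (at x)"
      using that by (auto intro!: derivative_eq_intros simp: field_simps)
    then show ?thesis
      by (simp add: has_real_derivative_iff_has_vector_derivative)
  qed
  show ?thesis
    using fundamental_theorem_of_calculus_interior[OF _ cont deriv] by simp
qed

lemma abel_density_continuous:
  assumes q: "q \<ge> 1"
  shows "continuous_on {0..<1} (abel_density q i)"
proof -
  have "sqrt (1 - s ^ q) \<noteq> 0" if "s \<in> {0..<1}" for s :: real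
  proof -
    have "s ^ q < 1" using that q by (simp add: power_less_one_real)
    then show ?thesis by simp
  qed
  then show ?thesis
    unfolding abel_density_def by (intro continuous_intros) auto
qed

text \<open>Domination by the model singularity, since s^q \<le> s on [0,1].\<close>
lemma abel_density_bound:
  assumes q: "q \<ge> 1" and s: "s \<in> {0..<1::real}"
  shows "norm (abel_density q i s) \<le> 1 / sqrt (1 - s)"
proof -
  have "s ^ q \<le> s"
    using s q by (simp add: power_decreasing[of 1 q s, simplified])
  then have sqrt_le: "sqrt (1 - s) \<le> sqrt (1 - s ^ q)" by simp
  have "s ^ q < 1" using s q by (simp add: power_less_one_real)
  have "norm (abel_density q i s) = s ^ i / sqrt (1 - s ^ q)"
    using s \<open>s ^ q < 1\<close> by (simp add: abel_density_def)
  also have "\<dots> \<le> 1 / sqrt (1 - s ^ q)"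
    using s \<open>s ^ q < 1\<close> by (intro divide_right_mono) (auto simp: power_le_one)
  also have "\<dots> \<le> 1 / sqrt (1 - s)"
    using sqrt_le s by (simp add: frac_le)
  finally show ?thesis .
qed

lemma abel_density_integrable:
  assumes q: "q \<ge> 1"
  shows "abel_density q i integrable_on {0..1}"
proof -
  have majorant: "(\<lambda>s. 1 / sqrt (1 - s)) integrable_on {0<..<1::real}"
    using inv_sqrt_has_integral integrable_on_Icc_iff_Ioo by blast
  have "abel_density q i integrable_on {0<..<1}"
  proof (rule measurable_bounded_by_integrable_imp_integrable)
    show "abel_density q i \<in> borel_measurable (lebesgue_on {0<..<1})"
      by (rule continuous_imp_measurable_on_sets_lebesgue)
         (auto intro: continuous_on_subset[OF abel_density_continuous[OF q]])
  qed (use majorant abel_density_bound[OF q] in auto)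
  then show ?thesis
    using integrable_on_Icc_iff_Ioo by blast
qed

lemma abel_prim_continuous: "q \<ge> 1 \<Longrightarrow> continuous_on {0..1} (abel_prim q i)"
  unfolding abel_prim_def by (rule indefinite_integral_continuous_1[OF abel_density_integrable])

lemma abel_prim_deriv:
  assumes q: "q \<ge> 1" and x: "0 < x" "x < 1"
  shows "(abel_prim q i has_real_derivative abel_density q i x) (at x)"
proof -
  define b where "b = (1 + x) / 2"
  have b: "x < b" "b < 1" using x by (auto simp: b_def)
  have "continuous_on {0..b} (abel_density q i)"
    using b by (intro continuous_on_subset[OF abel_density_continuous[OF q]]) auto
  from integral_has_real_derivative[OF this, of x]
  have "((\<lambda>y. integral {0..y} (abel_density q i)) has_real_derivative abel_density q i x)
          (at x within {0..b})"
    using x b by auto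
  moreover have "at x within {0..b} = at x"
    using x b by (intro at_within_interior) auto
  ultimately show ?thesis unfolding abel_prim_def[abs_def] by simp
qed

lemma power_has_integral: "((\<lambda>s. s ^ i) has_integral 1 / Suc i) {0..1::real}"
proof -
  have cont: "continuous_on {0..1} (\<lambda>s::real. s ^ Suc i / Suc i)"
    by (intro continuous_intros) auto
  have deriv: "((\<lambda>s::real. s ^ Suc i / Suc i) has_vector_derivative x ^ i) (at x)" for x :: real
  proof -
    have "DERIV (\<lambda>s. s ^ Suc i) x :> real (Suc i) * x ^ i"
      using DERIV_pow[of "Suc i" x] by simp
    then have "DERIV (\<lambda>s. s ^ Suc i / Suc i) x :> real (Suc i) * x ^ i / Suc i"
      by (rule DERIV_cdivide)
    then have "((\<lambda>s::real. s ^ Suc i / Suc i) has_real_derivative x ^ i) (at x)"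
      by (simp del: of_nat_Suc)
    then show ?thesis by (simp add: has_real_derivative_iff_has_vector_derivative)
  qed
  show ?thesis
    using fundamental_theorem_of_calculus_interior[OF _ cont deriv] by simp
qed

text \<open>F_i(1) \<ge> integral_0^1 s^i ds > 0; this makes all the periods nonzero.\<close>
lemma abel_prim_one_pos:
  assumes q: "q \<ge> 1"
  shows "abel_prim q i 1 > 0"
proof -
  have "((\<lambda>s. s ^ i) has_integral 1 / Suc i) {0<..<1::real}"
    using power_has_integral has_integral_Icc_iff_Ioo by blast
  moreover have "(abel_density q i has_integral abel_prim q i 1) {0<..<1}"
    using abel_density_integrable[OF q] has_integral_Icc_iff_Ioo unfolding abel_prim_def by blast
  moreover have "s ^ i \<le> abel_density q i s" if s: "s \<in> {0<..<1}" for s :: real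
  proof -
    have "0 \<le> s ^ q" "s ^ q < 1" using s q by (auto simp: power_less_one_real)
    then have sqrt: "0 < sqrt (1 - s ^ q)" "sqrt (1 - s ^ q) \<le> 1" by auto
    have "s ^ i * sqrt (1 - s ^ q) \<le> s ^ i"
      using s sqrt by (simp add: mult_left_le)
    then show ?thesis
      using sqrt unfolding abel_density_def by (simp add: le_divide_eq)
  qed
  ultimately have "1 / Suc i \<le> abel_prim q i 1" by (rule has_integral_le)
  moreover have "0 < 1 / real (Suc i)" by simp
  ultimately show ?thesis by linarith
qed

lemma abel_density_substitution:
  assumes q: "q \<ge> 1" and ab: "a \<le> b" and r_cont: "continuous_on {a..b} r"
    and r_range: "\<And>t. t \<in> {a..b} \<Longrightarrow> 0 \<le> r t \<and> r t \<le> 1"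
    and r_deriv: "\<And>t. t \<in> {a<..<b} \<Longrightarrow> (r has_real_derivative r' t) (at t) \<and> 0 < r t \<and> r t < 1"
  shows "((\<lambda>t. abel_density q i (r t) * r' t) has_integral
           (abel_prim q i (r b) - abel_prim q i (r a))) {a..b}"
proof -
  have cont: "continuous_on {a..b} (\<lambda>t. abel_prim q i (r t))"
    by (rule continuous_on_compose2[OF abel_prim_continuous[OF q] r_cont]) (use r_range in auto)
  have deriv: "((\<lambda>t. abel_prim q i (r t)) has_vector_derivative abel_density q i (r t) * r' t) (at t)"
    if t: "t \<in> {a<..<b}" for t
  proof -
    have "((\<lambda>t. abel_prim q i (r t)) has_real_derivative abel_density q i (r t) * r' t) (at t)"
      using r_deriv[OF t] abel_prim_deriv[OF q] by (intro DERIV_chain2) auto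
    then show ?thesis by (simp add: has_real_derivative_iff_has_vector_derivative)
  qed
  show ?thesis
    using fundamental_theorem_of_calculus_interior[OF ab cont deriv] by simp
qed

text \<open>An integrand that equals c times a pulled-back density while the radius r_a runs
  from 0 out to 1 on [0,1/2], and -c times it while r_b returns from 1 to 0 on [1/2,1],
  integrates to 2 c F_i(1): the sign change of w on the return sheet doubles the
  contribution instead of cancelling it.\<close>
lemma out_and_back_integral:
  fixes f :: "real \<Rightarrow> complex"
  assumes q: "q \<ge> 1"
    and ra_cont: "continuous_on {0..1/2} ra"
    and ra_range: "\<And>t. t \<in> {0..1/2} \<Longrightarrow> 0 \<le> ra t \<and> ra t \<le> 1"
    and ra_deriv: "\<And>t. t \<in> {0<..<1/2} \<Longrightarrow> (ra has_real_derivative ra' t) (at t) \<and> 0 < ra t \<and> ra t < 1"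
    and ra_ends: "ra 0 = 0" "ra (1/2) = 1"
    and rb_cont: "continuous_on {1/2..1} rb"
    and rb_range: "\<And>t. t \<in> {1/2..1} \<Longrightarrow> 0 \<le> rb t \<and> rb t \<le> 1"
    and rb_deriv: "\<And>t. t \<in> {1/2<..<1} \<Longrightarrow> (rb has_real_derivative rb' t) (at t) \<and> 0 < rb t \<and> rb t < 1"
    and rb_ends: "rb (1/2) = 1" "rb 1 = 0"
    and f_out: "\<And>t. t \<in> {0<..<1/2} \<Longrightarrow> f t = c * of_real (abel_density q i (ra t) * ra' t)"
    and f_back: "\<And>t. t \<in> {1/2<..<1} \<Longrightarrow> f t = - c * of_real (abel_density q i (rb t) * rb' t)"
  shows "(f has_integral (2 * c * of_real (abel_prim q i 1))) {0..1}"
proof -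
  have out_real: "((\<lambda>t. abel_density q i (ra t) * ra' t) has_integral abel_prim q i 1) {0..1/2}"
    using abel_density_substitution[OF q _ ra_cont ra_range ra_deriv] ra_ends by simp
  have outward: "(f has_integral (c * of_real (abel_prim q i 1))) {0..1/2}"
  proof (rule has_integral_spike[of "{0, 1/2}"])
    show "((\<lambda>t. c * of_real (abel_density q i (ra t) * ra' t)) has_integral
            (c * of_real (abel_prim q i 1))) {0..1/2}"
      by (rule has_integral_mult_right[OF has_integral_of_real[OF out_real]])
  qed (use f_out in auto)
  have in_real: "((\<lambda>t. abel_density q i (rb t) * rb' t) has_integral - abel_prim q i 1) {1/2..1}"
    using abel_density_substitution[OF q _ rb_cont rb_range rb_deriv] rb_ends by simp
  have inward: "(f has_integral (c * of_real (abel_prim q i 1))) {1/2..1}"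
  proof (rule has_integral_spike[of "{1/2, 1}"])
    show "((\<lambda>t. - c * of_real (abel_density q i (rb t) * rb' t)) has_integral
            (c * of_real (abel_prim q i 1))) {1/2..1}"
      using has_integral_mult_right[OF has_integral_of_real[OF in_real], of "- c"] by simp
  qed (use f_back in auto)
  show ?thesis
    using has_integral_combine[OF _ _ outward inward] by (simp add: mult.assoc)
qed


section \<open>The period of omega_i along a single path\<close>

lemma vector_derivative_interior:
  assumes "t \<in> {0<..<1::real}" "(f has_vector_derivative D) (at t)"
  shows "vector_derivative f (at t within {0..1}) = D"
  using assms vector_derivative_at at_within_interior[of t "{0..1}"] by auto

text \<open>The common value of all single-path periods: K_i = -2 i F_i(1), multiplied by
  powers of eta_i = zeta^(i+1).\<close>
definition period_const :: "nat \<Rightarrow> nat \<Rightarrow> complex" where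
  "period_const q i = - 2 * \<i> * of_real (abel_prim q i 1)"

definition eta :: "nat \<Rightarrow> nat \<Rightarrow> complex" where
  "eta q i = zeta q ^ Suc i"

lemma eta_nonzero: "eta q i \<noteq> 0"
  by (simp add: eta_def zeta_def)

lemma period_const_nonzero: "q \<ge> 1 \<Longrightarrow> period_const q i \<noteq> 0"
  using abel_prim_one_pos[of q i] by (simp add: period_const_def)

text \<open>The factor (zeta^k)^(i+1) produced by z^i dz along the ray through zeta^k.\<close>
lemma zeta_power_rotate: "(zeta q ^ k) ^ Suc i = eta q i ^ k"
  unfolding eta_def by (metis power_mult mult.commute)

lemma omega_int_gam:
  assumes q: "q \<ge> 1"
  shows "omega_int i (gam q k) = period_const q i * eta q i ^ k"
proof -
  let ?c = "- \<i> * (zeta q ^ k) ^ Suc i"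
  let ?f = "\<lambda>t. fst (gam q k t) ^ i / snd (gam q k t)
               * vector_derivative (\<lambda>s. fst (gam q k s)) (at t within {0..1})"
  have "(?f has_integral (2 * ?c * of_real (abel_prim q i 1))) {0..1}"
  proof (rule out_and_back_integral[OF q, where ra = "\<lambda>t. 2 * t" and ra' = "\<lambda>_. 2"
                                         and rb = "\<lambda>t. 2 - 2 * t" and rb' = "\<lambda>_. - 2"])
    fix t :: real assume t: "t \<in> {0<..<1/2}"
    have "((\<lambda>s. zeta q ^ k * of_real (2 * s)) has_vector_derivative zeta q ^ k * 2) (at t)"
      by (auto intro!: derivative_eq_intros)
    then have "((\<lambda>s. fst (gam q k s)) has_vector_derivative zeta q ^ k * 2) (at t)"
      by (rule has_vector_derivative_transform_within_open[where S = "{..<1/2}"])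
         (use t in \<open>auto simp: gam_def\<close>)
    then have vd: "vector_derivative (\<lambda>s. fst (gam q k s)) (at t within {0..1}) = zeta q ^ k * 2"
      by (rule vector_derivative_interior[rotated]) (use t in auto)
    have "(2 * t) ^ q < 1" using t q power_less_one_real[of q "2 * t"] by simp
    then show "?f t = ?c * of_real (abel_density q i (2 * t) * 2)"
      using t unfolding vd by (simp add: gam_def abel_density_def power_mult_distrib field_simps)
  next
    fix t :: real assume t: "t \<in> {1/2<..<1}"
    have "((\<lambda>s. zeta q ^ k * of_real (2 - 2 * s)) has_vector_derivative zeta q ^ k * (- 2)) (at t)"
      by (auto intro!: derivative_eq_intros)
    then have "((\<lambda>s. fst (gam q k s)) has_vector_derivative zeta q ^ k * (- 2)) (at t)"
      by (rule has_vector_derivative_transform_within_open[where S = "{1/2<..}"])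
         (use t in \<open>auto simp: gam_def\<close>)
    then have vd: "vector_derivative (\<lambda>s. fst (gam q k s)) (at t within {0..1}) = zeta q ^ k * (- 2)"
      by (rule vector_derivative_interior[rotated]) (use t in auto)
    have "(2 - 2 * t) ^ q < 1" using t q power_less_one_real[of q "2 - 2 * t"] by simp
    moreover have "gam q k t = (zeta q ^ k * of_real (2 - 2 * t),
                                - \<i> * of_real (sqrt (1 - (2 - 2 * t) ^ q)))"
      using t by (simp add: gam_def)
    moreover have "(zeta q ^ k * of_real (2 - 2 * t)) ^ i = (zeta q ^ k) ^ i * of_real ((2 - 2 * t) ^ i)"
      by (simp add: power_mult_distrib)
    ultimately show "?f t = - ?c * of_real (abel_density q i (2 - 2 * t) * (- 2))"
      unfolding vd by (simp add: abel_density_def field_simps)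
  qed (auto intro!: continuous_intros derivative_eq_intros)
  then have "omega_int i (gam q k) = 2 * ?c * of_real (abel_prim q i 1)"
    unfolding omega_int_def by (rule integral_unique)
  then show ?thesis
    unfolding zeta_power_rotate by (simp add: period_const_def)
qed

text \<open>Modulus of the z-coordinate along the lifted path sigma^j o I_0:
  |z| = (4 t (1 - t))^(1/q), which goes from 0 up to 1 and back.\<close>
definition radius :: "nat \<Rightarrow> real \<Rightarrow> real" where
  "radius q t = root q (4 * (t * (1 - t)))"

definition radius_deriv :: "nat \<Rightarrow> real \<Rightarrow> real" where
  "radius_deriv q t = inverse (real q * radius q t ^ (q - 1)) * (4 - 8 * t)"

lemma sigma_power: "(sigma q ^^ j) p = (fst p, zeta q ^ j * snd p)"
  by (induction j arbitrary: p) (auto simp: sigma_def)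

lemma lifted_path_coords:
  "fst ((to_zw q \<circ> (sigma q ^^ j) \<circ> I0 q) t) = zeta q ^ j * of_real (radius q t)"
  "snd ((to_zw q \<circ> (sigma q ^^ j) \<circ> I0 q) t) = - \<i> * (2 * of_real t - 1)"
  by (auto simp: sigma_power to_zw_def I0_def radius_def real_root_mult)

text \<open>4 t (1 - t) = 1 - (1 - 2t)^2 lies in [0,1], strictly inside away from 0, 1/2, 1.\<close>
lemma parabola_range: "t \<in> {0..1} \<Longrightarrow> 0 \<le> 4 * (t * (1 - t)) \<and> 4 * (t * (1 - t)) \<le> (1::real)"
  using mult_left_le_one_le[of t t] zero_le_power2[of "2 * t - 1"]
  by (auto simp: power2_eq_square algebra_simps)

lemma parabola_range_strict:
  "t \<in> {0<..<1} \<Longrightarrow> t \<noteq> 1/2 \<Longrightarrow> 0 < 4 * (t * (1 - t)) \<and> 4 * (t * (1 - t)) < (1::real)"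
  using zero_less_power2[of "2 * t - 1"] by (auto simp: power2_eq_square algebra_simps)

lemma radius_deriv_correct:
  assumes q: "q \<ge> 1" and t: "t \<in> {0<..<1}" "t \<noteq> 1/2"
  shows "(radius q has_real_derivative radius_deriv q t) (at t)"
proof -
  have pos: "0 < 4 * (t * (1 - t))" using parabola_range_strict[OF t] by simp
  have "DERIV (\<lambda>s. 4 * (s * (1 - s))) t :> 4 - 8 * t"
    by (auto intro!: derivative_eq_intros simp: algebra_simps)
  from DERIV_chain2[OF DERIV_real_root[OF _ pos] this] q show ?thesis
    unfolding radius_def[abs_def] radius_deriv_def radius_def by simp
qed

text \<open>On the lifted path w = -i(2t - 1) equals  +- i sqrt(1 - |z|^q), the sign
  flipping at t = 1/2 where the path passes the branch point.\<close>
lemma radius_sqrt: "q \<ge> 1 \<Longrightarrow> t \<in> {0..1} \<Longrightarrow> sqrt (1 - radius q t ^ q) = \<bar>1 - 2 * t\<bar>"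
proof -
  assume "q \<ge> 1" "t \<in> {0..1}"
  then have "radius q t ^ q = 4 * (t * (1 - t))"
    using parabola_range by (simp add: radius_def)
  then have "1 - radius q t ^ q = (1 - 2 * t) ^ 2" by (simp add: power2_eq_square algebra_simps)
  then show ?thesis by simp
qed

lemma omega_int_lifted:
  assumes q: "q \<ge> 1"
  shows "omega_int i (to_zw q \<circ> (sigma q ^^ j) \<circ> I0 q) = period_const q i * eta q i ^ j"
proof -
  let ?c = "- \<i> * (zeta q ^ j) ^ Suc i"
  let ?p = "to_zw q \<circ> (sigma q ^^ j) \<circ> I0 q"
  let ?f = "\<lambda>t. fst (?p t) ^ i / snd (?p t) * vector_derivative (\<lambda>s. fst (?p s)) (at t within {0..1})"
  have vd: "vector_derivative (\<lambda>s. zeta q ^ j * of_real (radius q s)) (at t within {0..1})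
              = zeta q ^ j * of_real (radius_deriv q t)"
    if t: "t \<in> {0<..<1}" "t \<noteq> 1/2" for t
    by (rule vector_derivative_interior[OF t(1)])
       (use radius_deriv_correct[OF q t] in \<open>auto intro!: derivative_eq_intros\<close>)
  have z_power: "(zeta q ^ j * of_real (radius q t)) ^ i = (zeta q ^ j) ^ i * of_real (radius q t ^ i)" for t
    by (simp add: power_mult_distrib)
  have "(?f has_integral (2 * ?c * of_real (abel_prim q i 1))) {0..1}"
  proof (rule out_and_back_integral[OF q, where ra = "radius q" and ra' = "radius_deriv q"
                                         and rb = "radius q" and rb' = "radius_deriv q"])
    fix t :: real assume t: "t \<in> {0<..<1/2}"
    then have t': "t \<in> {0<..<1}" "t \<noteq> 1/2" by auto
    have sqrt_eq: "sqrt (1 - radius q t ^ q) = 1 - 2 * t" using radius_sqrt[OF q, of t] t by auto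
    have w: "- \<i> * (2 * of_real t - 1) = \<i> * of_real (sqrt (1 - radius q t ^ q))"
      unfolding sqrt_eq by (simp add: algebra_simps)
    have "0 < sqrt (1 - radius q t ^ q)" using sqrt_eq t by simp
    then show "?f t = ?c * of_real (abel_density q i (radius q t) * radius_deriv q t)"
      unfolding lifted_path_coords vd[OF t'] w z_power by (simp add: abel_density_def field_simps)
  next
    fix t :: real assume t: "t \<in> {1/2<..<1}"
    then have t': "t \<in> {0<..<1}" "t \<noteq> 1/2" by auto
    have sqrt_eq: "sqrt (1 - radius q t ^ q) = 2 * t - 1" using radius_sqrt[OF q, of t] t by auto
    have w: "- \<i> * (2 * of_real t - 1) = - \<i> * of_real (sqrt (1 - radius q t ^ q))"
      unfolding sqrt_eq by (simp add: algebra_simps)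
    have "0 < sqrt (1 - radius q t ^ q)" using sqrt_eq t by simp
    then show "?f t = - ?c * of_real (abel_density q i (radius q t) * radius_deriv q t)"
      unfolding lifted_path_coords vd[OF t'] w z_power by (simp add: abel_density_def field_simps)
  next
    show "continuous_on {0..1/2} (radius q)" "continuous_on {1/2..1} (radius q)"
      unfolding radius_def[abs_def] by (auto intro!: continuous_intros)
  qed (use q parabola_range parabola_range_strict radius_deriv_correct in \<open>auto simp: radius_def\<close>)
  then have "omega_int i ?p = 2 * ?c * of_real (abel_prim q i 1)"
    unfolding omega_int_def by (rule integral_unique)
  then show ?thesis
    unfolding zeta_power_rotate by (simp add: period_const_def)
qed


section \<open>Periods of the cycles\<close>

lemma chain_int_Nil [simp]: "chain_int i [] = 0"
  by (simp add: chain_int_def)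

lemma chain_int_Cons [simp]: "chain_int i ((n, \<gamma>) # cs) = of_int n * omega_int i \<gamma> + chain_int i cs"
  by (simp add: chain_int_def)

lemma chain_int_append [simp]: "chain_int i (xs @ ys) = chain_int i xs + chain_int i ys"
  by (simp add: chain_int_def)

lemma chain_int_rev [simp]: "chain_int i (rev xs) = chain_int i xs"
  by (induction xs) auto

lemma chain_int_scale: "chain_int i (map (\<lambda>(n, \<gamma>). (c * n, \<gamma>)) cs) = of_int c * chain_int i cs"
  by (induction cs) (auto simp: algebra_simps)

lemma chain_int_concat: "chain_int i (concat L) = (\<Sum>cs\<leftarrow>L. chain_int i cs)"
  by (induction L) auto

lemma chain_int_map: "chain_int i (map (\<lambda>k. (c k, \<gamma> k)) [a..<b]) = (\<Sum>k=a..<b. of_int (c k) * omega_int i (\<gamma> k))"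
  by (induction b) auto

lemma period_A: "q \<ge> 1 \<Longrightarrow> chain_int i (cycA q m) = period_const q i * (eta q i ^ (2*m - 1) - eta q i ^ (2*m))"
  by (simp add: cycA_def omega_int_gam algebra_simps)

lemma period_B:
  assumes q: "q \<ge> 1"
  shows "chain_int i (cycB q m) = period_const q i * (\<Sum>k<2*m. (-1) ^ (k + 1) * eta q i ^ k)"
proof -
  have sign: "(-1::complex) ^ (2 * m - Suc k) = - ((-1) ^ k)" if "k < 2 * m" for k
  proof -
    have "even (2 * m - Suc k) \<longleftrightarrow> odd k" using that by presburger
    then show ?thesis by (simp add: minus_one_power_iff)
  qed
  have "chain_int i (cycB q m) = chain_int i (map (\<lambda>k. ((-1) ^ (2*m - 1 - k), gam q k)) [0..<2*m])"
    unfolding cycB_def rev_map[symmetric] chain_int_rev ..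
  also have "\<dots> = (\<Sum>k<2*m. period_const q i * ((-1) ^ (k + 1) * eta q i ^ k))"
    unfolding chain_int_map atLeast0LessThan
    by (rule sum.cong) (auto simp: omega_int_gam[OF q] sign)
  finally show ?thesis by (simp add: sum_distrib_left)
qed

text \<open>The first path of c_k is the k = 0 instance of the lifted path (sigma^0 = id).\<close>
lemma period_c: "q \<ge> 1 \<Longrightarrow> chain_int i (cyc_c q k) = period_const q i * (1 - eta q i ^ k)"
  using omega_int_lifted[of q i 0] by (simp add: cyc_c_def omega_int_lifted algebra_simps)

text \<open>Period of the signed sum  sum_{k=1}^{N-1} (-1)^(k-1) c_k  (the k = 0 term vanishes).\<close>
lemma period_c_sum:
  assumes q: "q \<ge> 1"
  shows "chain_int i (concat (map (\<lambda>k. map (\<lambda>(n, \<gamma>). ((-1) ^ (k - 1) * n, \<gamma>)) (cyc_c q k)) [1..<N]))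
           = period_const q i * (\<Sum>k<N. (-1) ^ (k - 1) * (1 - eta q i ^ k))"
proof -
  have "chain_int i (concat (map (\<lambda>k. map (\<lambda>(n, \<gamma>). ((-1) ^ (k - 1) * n, \<gamma>)) (cyc_c q k)) [1..<N]))
      = (\<Sum>k=1..<N. period_const q i * ((-1) ^ (k - 1) * (1 - eta q i ^ k)))"
    unfolding chain_int_concat map_map o_def chain_int_scale sum_set_upt_conv_sum_list_nat[symmetric]
    by (rule sum.cong) (auto simp: period_c[OF q])
  also have "\<dots> = (\<Sum>k<N. period_const q i * ((-1) ^ (k - 1) * (1 - eta q i ^ k)))"
    by (cases N) (simp_all add: atLeast0LessThan[symmetric] sum.atLeast_Suc_lessThan)
  finally show ?thesis by (simp add: sum_distrib_left)
qed

lemma alternating_sum_identity: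
  "(\<Sum>k<2*m. (-1) ^ (k - 1) * (1 - x ^ k)) = - (\<Sum>k<2*m. (-1) ^ (k + 1) * x ^ k :: complex)"
proof (induction m)
  case (Suc m)
  have double_Suc: "2 * Suc m = Suc (Suc (2 * m))" by simp
  show ?case
    unfolding double_Suc sum.lessThan_Suc using Suc by (cases m) (simp_all add: algebra_simps)
qed simp

lemma period_a: "q \<ge> 1 \<Longrightarrow> chain_int i (cyca q m) = - chain_int i (cycB q m)"
  unfolding cyca_def period_c_sum period_B alternating_sum_identity by simp

lemma period_b:
  assumes q: "q \<ge> 1" and m: "m \<ge> 1"
  shows "chain_int i (cycb q m) = chain_int i (cycA q m) - chain_int i (cycB q m)"
proof -
  let ?f = "\<lambda>k. (-1) ^ (k - 1) * (1 - eta q i ^ k)"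
  have double_pred: "2 * m = Suc (2 * m - 1)" using m by simp
  have "(\<Sum>k<2*m. ?f k) = (\<Sum>k<2*m - 1. ?f k) + ?f (2*m - 1)"
    by (subst double_pred, subst sum.lessThan_Suc) simp
  moreover have "?f (2*m - 1) = 1 - eta q i ^ (2*m - 1)"
  proof -
    have "2 * m - 1 - 1 = 2 * (m - 1)" by simp
    then show ?thesis by (simp add: power_mult)
  qed
  ultimately have initial_part: "(\<Sum>k<2*m - 1. ?f k)
      = - (\<Sum>k<2*m. (-1) ^ (k + 1) * eta q i ^ k) - 1 + eta q i ^ (2*m - 1)"
    using alternating_sum_identity[where m = m and x = "eta q i"] by (simp add: algebra_simps)
  show ?thesis
    unfolding cycb_def chain_int_append period_c_sum[OF q] period_c[OF q] period_A[OF q] period_B[OF q]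
      initial_part
    by (simp add: algebra_simps)
qed


section \<open>Roots of unity and polynomials\<close>

lemma zeta_power_ne_1:
  assumes q: "q > 0" and n: "0 < n" "n < q"
  shows "zeta q ^ n \<noteq> 1"
proof
  assume "zeta q ^ n = 1"
  moreover have "exp (of_nat n * (2 * pi * \<i> / of_nat q)) = zeta q ^ n"
    unfolding zeta_def by (rule exp_of_nat_mult)
  ultimately have "exp (of_nat n * (2 * pi * \<i> / of_nat q)) = 1" by simp
  then obtain k :: int where k: "Im (of_nat n * (2 * pi * \<i> / of_nat q)) = of_int (2 * k) * pi"
    unfolding exp_eq_1 by blast
  have "Im (of_nat n * (2 * pi * \<i> / of_nat q)) = 2 * pi * real n / real q"
    using q by (simp add: Im_divide power2_eq_square)
  with k have "real n = real_of_int k * real q" using q by (simp add: field_simps)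
  then have kq: "int n = k * int q" by (metis of_int_eq_iff of_int_mult of_int_of_nat_eq)
  then have "0 < k * int q" using n by linarith
  then have "int q \<le> k * int q" using q by (simp add: zero_less_mult_iff)
  with kq n show False by linarith
qed

lemma zeta_power_inj:
  assumes q: "q > 0" and ab: "a < q" "b < q" "a \<le> b" and eq: "zeta q ^ a = zeta q ^ b"
  shows "a = b"
proof (rule ccontr)
  assume "a \<noteq> b"
  have "zeta q ^ b = zeta q ^ a * zeta q ^ (b - a)"
    using ab by (simp flip: power_add)
  then have "zeta q ^ (b - a) = 1" using eq by (simp add: zeta_def)
  then show False using zeta_power_ne_1[OF q, of "b - a"] ab \<open>a \<noteq> b\<close> by auto
qed

lemma coeffs_vanish_if_many_roots:
  fixes c :: "nat \<Rightarrow> complex"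
  assumes j: "j \<le> n" and S: "finite S" "card S > n"
    and roots: "\<And>x. x \<in> S \<Longrightarrow> (\<Sum>k\<le>n. c k * x ^ k) = 0"
  shows "c j = 0"
proof -
  define p where "p = (\<Sum>k\<le>n. monom (c k) k)"
  have coeff_p: "coeff p k = (if k \<le> n then c k else 0)" for k
    unfolding p_def by (simp add: coeff_sum)
  have "p = 0"
  proof (rule ccontr)
    assume "p \<noteq> 0"
    have "S \<subseteq> {x. poly p x = 0}"
      using roots by (auto simp: p_def poly_sum poly_monom)
    then have "card S \<le> card {x. poly p x = 0}"
      by (rule card_mono[OF poly_roots_finite[OF \<open>p \<noteq> 0\<close>]])
    also have "\<dots> \<le> degree p" by (rule card_poly_roots_bound) fact
    also have "\<dots> \<le> n" by (rule degree_le) (simp add: coeff_p)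
    finally show False using S by linarith
  qed
  then show ?thesis using coeff_p[of j] j by simp
qed

lemma alternating_geometric_sum:
  "(1 + x) * (\<Sum>k<2*m. (-1) ^ (k + 1) * x ^ k) = x ^ (2 * m) - (1::complex)"
proof (induction m)
  case (Suc m)
  have double_Suc: "2 * Suc m = Suc (Suc (2 * m))" by simp
  have "(1 + x) * (\<Sum>k<2*Suc m. (-1) ^ (k + 1) * x ^ k)
      = (1 + x) * (\<Sum>k<2*m. (-1) ^ (k + 1) * x ^ k) + (1 + x) * (x ^ (2*m + 1) - x ^ (2 * m))"
    unfolding double_Suc sum.lessThan_Suc by (simp add: algebra_simps)
  also have "\<dots> = x ^ (2 * Suc m) - 1"
    unfolding Suc by (simp add: algebra_simps power2_eq_square)
  finally show ?case .
qed simp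


section \<open>Linear algebra\<close>

lemma mult_mat_vec_entry:
  "A \<in> carrier_mat n n \<Longrightarrow> v \<in> carrier_vec n \<Longrightarrow> i < n \<Longrightarrow>
   (A *\<^sub>v v) $ i = (\<Sum>j<n. A $$ (i, j) * v $ j)"
  by (auto simp: scalar_prod_def atLeast0LessThan)

lemma det_nonzero_if_kernel_trivial:
  fixes A :: "complex mat"
  assumes A: "A \<in> carrier_mat n n"
    and ker: "\<And>v. v \<in> carrier_vec n \<Longrightarrow> A *\<^sub>v v = 0\<^sub>v n \<Longrightarrow> v = 0\<^sub>v n"
  shows "Determinant.det A \<noteq> 0"
  using det_0_iff_vec_prod_zero[OF A] ker by blast

lemma mat_inv_spec:
  fixes A :: "complex mat"
  assumes A: "A \<in> carrier_mat n n" and det: "Determinant.det A \<noteq> 0"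
  shows "mat_inv A \<in> carrier_mat n n" "A * mat_inv A = 1\<^sub>m n" "mat_inv A * A = 1\<^sub>m n"
proof -
  have "A \<in> Units (ring_mat TYPE(complex) n ())"
    by (rule det_non_zero_imp_unit[OF A det])
  then obtain C where C: "mat_inverse A = Some C"
    using mat_inverse(1)[OF A] by fastforce
  from mat_inverse(2)[OF A C]
  show "mat_inv A \<in> carrier_mat n n" "A * mat_inv A = 1\<^sub>m n" "mat_inv A * A = 1\<^sub>m n"
    unfolding mat_inv_def C by auto
qed

lemma mat_inv_eqI:
  fixes A B :: "complex mat"
  assumes A: "A \<in> carrier_mat n n" and B: "B \<in> carrier_mat n n" and AB: "A * B = 1\<^sub>m n"
  shows "mat_inv A = B"
proof -
  have "Determinant.det A * Determinant.det B = 1"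
    using arg_cong[OF AB, of Determinant.det] det_mult[OF A B] by simp
  then have "Determinant.det A \<noteq> 0" by auto
  note inv = mat_inv_spec[OF A this]
  have "mat_inv A = mat_inv A * (A * B)" using inv(1) by (simp add: AB)
  also have "\<dots> = (mat_inv A * A) * B" using inv(1) A B by simp
  also have "\<dots> = B" using B by (simp add: inv(3))
  finally show ?thesis .
qed

lemma period_matrix_change:
  fixes MA MB :: "complex mat"
  assumes A: "MA \<in> carrier_mat n n" and B: "MB \<in> carrier_mat n n"
    and detA: "Determinant.det MA \<noteq> 0" and detB: "Determinant.det MB \<noteq> 0"
  shows "invertible_mat (mat_inv MA * MB) \<and>
         mat_inv (- MB) * (MA - MB) = - mat_inv (mat_inv MA * MB) + 1\<^sub>m n"
proof -
  note invA = mat_inv_spec[OF A detA] and invB = mat_inv_spec[OF B detB]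
  define T where "T = mat_inv MA * MB"
  define S where "S = mat_inv MB * MA"
  have T: "T \<in> carrier_mat n n" and S: "S \<in> carrier_mat n n"
    using invA(1) invB(1) A B by (auto simp: T_def S_def)
  have "T * S = mat_inv MA * (MB * S)"
    unfolding T_def by (rule assoc_mult_mat[OF invA(1) B S])
  also have "MB * S = (MB * mat_inv MB) * MA"
    unfolding S_def by (rule assoc_mult_mat[OF B invB(1) A, symmetric])
  finally have TS: "T * S = 1\<^sub>m n"
    using invB(2) invA(3) A by simp
  have ST: "S * T = 1\<^sub>m n"
    by (rule mat_mult_left_right_inverse[OF T S TS])
  have "invertible_mat T"
    unfolding invertible_mat_def inverts_mat_def using T S TS ST by auto
  moreover have "mat_inv (- MB) = - mat_inv MB"
    by (rule mat_inv_eqI) (use B invB in auto)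
  then have "mat_inv (- MB) * (MA - MB) = - S + 1\<^sub>m n"
    unfolding S_def using invB A B
    by (simp add: mult_minus_distrib_mat uminus_mult_left_mat) (rule eq_matI, auto)
  ultimately show ?thesis
    using mat_inv_eqI[OF T S TS] by (simp add: T_def)
qed


section \<open>Nonsingularity of the period matrices Omega_A and Omega_B\<close>

lemma period_mat_carrier: "period_mat g \<alpha> \<in> carrier_mat g g"
  by (simp add: period_mat_def)

text \<open>The points at which the polynomials of the kernel argument are evaluated.\<close>
lemma eta_square: "eta q i ^ 2 = zeta q ^ (2 * Suc i)"
  unfolding eta_def by (metis power_mult mult.commute)

text \<open>From here on q = 2g + 1, so that the exponents 2i + 2 with i < g are below q.\<close>
context
  fixes g q :: nat
  assumes q_def: "q = 2 * g + 1"
begin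

lemma eta_ne_1: "i < g \<Longrightarrow> eta q i \<noteq> 1"
  unfolding eta_def using q_def by (intro zeta_power_ne_1) auto

lemma eta_square_ne_1: "i < g \<Longrightarrow> eta q i ^ 2 \<noteq> 1"
  unfolding eta_square using q_def by (intro zeta_power_ne_1) auto

text \<open>The g squares eta_i^2 = zeta^(2i+2), i < g, are distinct since 2i + 2 < q.\<close>
lemma card_eta_squares: "card ((\<lambda>i. eta q i ^ 2) ` {..<g}) = g"
proof -
  have "inj_on (\<lambda>i. eta q i ^ 2) {..<g}"
  proof (rule linorder_inj_onI)
    fix a b assume "a < b" "a \<in> {..<g}" "b \<in> {..<g}"
    then show "eta q a ^ 2 \<noteq> eta q b ^ 2"
      unfolding eta_square using q_def zeta_power_inj[of q "2 * Suc a" "2 * Suc b"] by auto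
  qed auto
  then show ?thesis by (simp add: card_image)
qed

lemma period_A_entry: "i < g \<Longrightarrow> j < g \<Longrightarrow> period_mat g (cycA q) $$ (i, j)
   = period_const q i * eta q i * (1 - eta q i) * (eta q i ^ 2) ^ j"
  using q_def by (simp add: period_mat_def period_A power_mult[symmetric] algebra_simps)

lemma period_B_entry: "i < g \<Longrightarrow> j < g \<Longrightarrow> period_mat g (cycB q) $$ (i, j)
   = period_const q i * (\<Sum>k<2 * Suc j. (-1) ^ (k + 1) * eta q i ^ k)"
  using q_def by (simp add: period_mat_def period_B)

text \<open>Row i of Omega_A is a nonzero multiple of (1, x, ..., x^(g-1)) with x = eta_i^2: a
  Vandermonde matrix.\<close>
lemma det_period_A: "Determinant.det (period_mat g (cycA q)) \<noteq> 0"
proof (rule det_nonzero_if_kernel_trivial)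
  fix v assume v: "v \<in> carrier_vec g" "period_mat g (cycA q) *\<^sub>v v = 0\<^sub>v g"
  have root: "(\<Sum>j\<le>g - 1. v $ j * x ^ j) = 0" if x: "x \<in> (\<lambda>i. eta q i ^ 2) ` {..<g}" for x
  proof -
    obtain i where i: "i < g" "x = eta q i ^ 2" using x by auto
    have "0 = (period_mat g (cycA q) *\<^sub>v v) $ i" using v(2) i by simp
    also have "\<dots> = (\<Sum>j<g. (period_const q i * eta q i * (1 - eta q i)) * (v $ j * x ^ j))"
      unfolding mult_mat_vec_entry[OF period_mat_carrier v(1) i(1)]
      by (rule sum.cong[OF refl]) (simp add: period_A_entry i mult_ac)
    also have "\<dots> = (period_const q i * eta q i * (1 - eta q i)) * (\<Sum>j<g. v $ j * x ^ j)"
      by (simp add: sum_distrib_left)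
    finally have "(\<Sum>j<g. v $ j * x ^ j) = 0"
      using q_def period_const_nonzero eta_nonzero eta_ne_1[OF i(1)] by simp
    moreover have "{..g - 1} = {..<g}" using i by auto
    ultimately show ?thesis by simp
  qed
  have "v $ j = 0" if "j < g" for j
    by (rule coeffs_vanish_if_many_roots[OF _ _ _ root]) (use that card_eta_squares in auto)
  then show "v = 0\<^sub>v g" using v(1) by auto
qed (rule period_mat_carrier)

text \<open>After multiplying row i by 1 + eta_i, Omega_B becomes K_i (x^(j+1) - 1) with
  x = eta_i^2, so a kernel vector yields a polynomial of degree \<le> g vanishing at 1 and at
  the g points eta_i^2.\<close>
lemma det_period_B: "Determinant.det (period_mat g (cycB q)) \<noteq> 0"
proof (rule det_nonzero_if_kernel_trivial)
  fix v assume v: "v \<in> carrier_vec g" "period_mat g (cycB q) *\<^sub>v v = 0\<^sub>v g"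
  define c where "c = (\<lambda>j. case j of 0 \<Rightarrow> - (\<Sum>k<g. v $ k) | Suc k \<Rightarrow> v $ k)"
  have c_poly: "(\<Sum>j\<le>g. c j * x ^ j) = (\<Sum>k<g. v $ k * (x ^ Suc k - 1))" for x
    unfolding atMost_atLeast0 atLeastLessThanSuc_atLeastAtMost[symmetric] sum.atLeast0_lessThan_Suc_shift
    by (simp add: c_def algebra_simps sum_subtractf sum_distrib_left atLeast0LessThan)
  let ?S = "insert 1 ((\<lambda>i. eta q i ^ 2) ` {..<g})"
  have root: "(\<Sum>j\<le>g. c j * x ^ j) = 0" if x: "x \<in> ?S" for x
  proof (cases "x = 1")
    case True
    then show ?thesis unfolding c_poly by simp
  next
    case False
    then obtain i where i: "i < g" "x = eta q i ^ 2" using x by auto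
    have "0 = (1 + eta q i) * (period_mat g (cycB q) *\<^sub>v v) $ i" using v(2) i by simp
    also have "\<dots> = period_const q i * (\<Sum>j<g. v $ j * ((1 + eta q i) * (\<Sum>k<2*Suc j. (-1) ^ (k + 1) * eta q i ^ k)))"
      unfolding mult_mat_vec_entry[OF period_mat_carrier v(1) i(1)]
      by (simp add: period_B_entry i sum_distrib_left algebra_simps)
    also have "\<dots> = period_const q i * (\<Sum>j<g. v $ j * (x ^ Suc j - 1))"
      unfolding alternating_geometric_sum i(2) by (simp add: power_mult power2_eq_square mult.assoc)
    finally show ?thesis
      using period_const_nonzero[of q i] q_def unfolding c_poly by simp
  qed
  have "card ?S = Suc g"
    using card_eta_squares eta_square_ne_1 by (subst card_insert_disjoint) auto
  then have "c (Suc j) = 0" if "j < g" for j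
    by (intro coeffs_vanish_if_many_roots[of _ g ?S, OF _ _ _ root]) (use that in auto)
  then have "v $ j = 0" if "j < g" for j
    using that by (simp add: c_def)
  then show "v = 0\<^sub>v g" using v(1) by auto
qed (rule period_mat_carrier)

end


theorem mainTheorem10:
  fixes g q :: nat
  assumes "g \<ge> 2" and "q = 2 * g + 1"
  shows "invertible_mat (period_matrix g (cycA q) (cycB q)) \<and>
         period_matrix g (cyca q) (cycb q)
           = - mat_inv (period_matrix g (cycA q) (cycB q)) + 1\<^sub>m g"
proof -
  have q: "q \<ge> 1" using assms(2) by simp
  have periods_a: "period_mat g (cyca q) = - period_mat g (cycB q)"
    by (rule eq_matI) (auto simp: period_mat_def period_a[OF q])
  have periods_b: "period_mat g (cycb q) = period_mat g (cycA q) - period_mat g (cycB q)"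
    by (rule eq_matI) (auto simp: period_mat_def period_b[OF q])
  show ?thesis
    unfolding period_matrix_def periods_a periods_b
    by (rule period_matrix_change[OF period_mat_carrier period_mat_carrier det_period_A[OF assms(2)] det_period_B[OF assms(2)]])
qed

end
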